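(* For every positive integer $n$, $C_S(y^n x^n) = K[y^n x^n]$.
   Context: Standing conventions: $K$ is a field, $R = K[y]$, $\sigma$ is a $K$-algebra endomorphism of $R$ with $\deg_y(\sigma(y)) > 1$, and $\delta$ is a $K$-linear $\sigma$-derivation of $R$ ($\delta(ab) = \sigma(a)\delta(b) + \delta(a)b$). $S = R[x;\sigma,\delta]$ is the Ore extension (polynomials $\sum r_i x^i$, $r_i\in R$, with $xr = \sigma(r)x + \delta(r)$). $C_S(P)$ is the centralizer of $P$ in $S$, and $K[P] = \{\sum_i c_i P^i : c_i \in K\}$. *)

theory Defs
  imports "HOL-Computational_Algebra.Polynomial"
begin

text \<open>Ore extension S = R[x; sigma, delta] with R = K[y].
  An element sum_i r_i x^i (coefficients written on the left) is represented as
  an 'a poly poly P with coeff P i = r_i.\<close>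

definition ore_xmul :: "('a::field poly \<Rightarrow> 'a poly) \<Rightarrow> ('a poly \<Rightarrow> 'a poly)
    \<Rightarrow> 'a poly poly \<Rightarrow> 'a poly poly" where
  "ore_xmul \<sigma> \<delta> Q = pCons 0 (map_poly \<sigma> Q) + map_poly \<delta> Q"

definition ore_mult :: "('a::field poly \<Rightarrow> 'a poly) \<Rightarrow> ('a poly \<Rightarrow> 'a poly)
    \<Rightarrow> 'a poly poly \<Rightarrow> 'a poly poly \<Rightarrow> 'a poly poly" where
  "ore_mult \<sigma> \<delta> P Q = (\<Sum>i\<le>degree P. smult (coeff P i) ((ore_xmul \<sigma> \<delta> ^^ i) Q))"

definition ore_pow :: "('a::field poly \<Rightarrow> 'a poly) \<Rightarrow> ('a poly \<Rightarrow> 'a poly)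
    \<Rightarrow> 'a poly poly \<Rightarrow> nat \<Rightarrow> 'a poly poly" where
  "ore_pow \<sigma> \<delta> P k = (ore_mult \<sigma> \<delta> P ^^ k) 1"

definition ore_centralizer :: "('a::field poly \<Rightarrow> 'a poly) \<Rightarrow> ('a poly \<Rightarrow> 'a poly)
    \<Rightarrow> 'a poly poly \<Rightarrow> 'a poly poly set" where
  "ore_centralizer \<sigma> \<delta> P = {Q. ore_mult \<sigma> \<delta> P Q = ore_mult \<sigma> \<delta> Q P}"

definition ore_Kalg :: "('a::field poly \<Rightarrow> 'a poly) \<Rightarrow> ('a poly \<Rightarrow> 'a poly)
    \<Rightarrow> 'a poly poly \<Rightarrow> 'a poly poly set" where
  "ore_Kalg \<sigma> \<delta> P = {Q. \<exists>(c::nat \<Rightarrow> 'a) m. Q = (\<Sum>i\<le>m. smult [:c i:] (ore_pow \<sigma> \<delta> P i))}"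

end

theory Submission
  imports Defs "HOL-Number_Theory.Cong"
begin

text \<open>Let \<open>P = y\<^sup>n x\<^sup>n\<close> and \<open>d = deg \<sigma>(y) \<ge> 2\<close>. If \<open>Q\<close> commutes with \<open>P\<close> and has
  \<open>x\<close>-degree \<open>m\<close> and leading coefficient \<open>q\<close>, comparing leading coefficients of \<open>PQ = QP\<close> gives
  \<open>y\<^sup>n \<sigma>\<^sup>n(q) = q \<sigma>\<^sup>m(y\<^sup>n)\<close>, and comparing \<open>y\<close>-degrees gives
  \<open>deg q (d\<^sup>n - 1) = n (d\<^sup>m - 1)\<close>. This forces \<open>n | m\<close> and fixes \<open>deg q\<close>, so the
  \<open>K\<close>-linear solution space of the leading-coefficient equation is at most one-dimensional. As
  \<open>P\<^bsup>m/n\<^esup>\<close> supplies a nonzero solution, subtracting a scalar multiple of \<open>P\<^bsup>m/n\<^esup>\<close> from \<open>Q\<close>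
  lowers the \<open>x\<close>-degree, and induction puts \<open>Q\<close> in \<open>K[P]\<close>.\<close>

lemma cong_mult_power_mod:
  fixes c d N :: nat
  assumes "[c * d ^ b = c] (mod N)"
  shows "[c * d ^ a = c * d ^ (a mod b)] (mod N)"
proof -
  have "[c * d ^ (b * q + r) = c * d ^ r] (mod N)" for q r
  proof (induction q)
    case 0
    show ?case by simp
  next
    case (Suc q)
    have "c * d ^ (b * Suc q + r) = d ^ (b * q + r) * (c * d ^ b)"
      by (simp add: power_add algebra_simps)
    also have "[\<dots> = d ^ (b * q + r) * c] (mod N)"
      using assms by (rule cong_scalar_left)
    also have "[d ^ (b * q + r) * c = c * d ^ r] (mod N)"
      using Suc.IH by (simp add: mult.commute)
    finally show ?case .
  qed
  from this[of "a div b" "a mod b"] show ?thesis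
    by simp
qed

lemma cong_mult_power_gcd:
  fixes c d N :: nat
  assumes "[c * d ^ a = c] (mod N)" "[c * d ^ b = c] (mod N)"
  shows "[c * d ^ gcd a b = c] (mod N)"
  using assms
proof (induction a b rule: gcd_nat_induct)
  case (base a)
  then show ?case by simp
next
  case (step a b)
  have "[c * d ^ (a mod b) = c] (mod N)"
    using cong_mult_power_mod[OF step.prems(2), of a] step.prems(1)
    by (meson cong_sym cong_trans)
  with step show ?case
    by (simp add: gcd_non_0_nat)
qed

lemma sum_powers_ge:
  fixes u k :: nat
  assumes "u \<ge> 1" "k \<ge> 1"
  shows "1 + (k - 1) * u \<le> (\<Sum>i<k. u ^ i)"
  using assms(2)
proof (induction k rule: dec_induct)
  case base
  show ?case by simp
next
  case (step k)
  have "u \<le> u ^ k"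
    using assms(1) step.hyps(1) by (simp add: self_le_power)
  moreover have "1 + (Suc k - 1) * u = 1 + (k - 1) * u + u"
    using step.hyps(1) by (cases k) auto
  ultimately show ?case
    using step.IH by simp
qed

lemma double_le_power_two: "2 * g \<le> (2::nat) ^ g"
proof (cases g)
  case (Suc h)
  have "Suc h \<le> 2 ^ h"
    using less_exp[of h] by linarith
  then show ?thesis
    using Suc by simp
qed simp

lemma mult_power_minus_one_less:
  fixes d g n :: nat
  assumes d: "d \<ge> 2" and g: "g dvd n" "0 < g" "g < n"
  shows "n * (d ^ g - 1) < d ^ n - 1"
proof -
  obtain k where n: "n = g * k" using g(1) ..
  with g have "k \<noteq> 0" "k \<noteq> 1"
    by auto
  then have k: "k \<ge> 2"
    by linarith
  define u where "u = d ^ g"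
  have u: "u > 1"
    using d g(2) unfolding u_def by (intro one_less_power) auto
  have "2 * g \<le> u"
    using double_le_power_two[of g] power_mono[of 2 d g] d unfolding u_def by linarith
  then have "(k - 1) * (2 * g) \<le> (k - 1) * u"
    by (rule mult_le_mono2)
  moreover have "g * k \<le> (k - 1) * (2 * g)"
    using k by (cases k rule: nat_induct_at_least[of 2]) (auto simp: algebra_simps)
  ultimately have "g * k < 1 + (k - 1) * u"
    by linarith
  also have "\<dots> \<le> (\<Sum>i<k. u ^ i)"
    using u k by (intro sum_powers_ge) auto
  finally have "(u - 1) * (g * k) < (u - 1) * (\<Sum>i<k. u ^ i)"
    using u by (intro mult_strict_left_mono) auto
  also have "\<dots> = u ^ k - 1"
  proof -
    have "int ((u - 1) * (\<Sum>i<k. u ^ i)) = int (u ^ k - 1)"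
      using d by (simp add: u_def of_nat_diff power_diff_1_eq)
    then show ?thesis by (simp only: of_nat_eq_iff)
  qed
  finally show ?thesis
    by (simp add: n u_def power_mult mult.commute)
qed

text \<open>The exponents \<open>a\<close> with \<open>(d\<^sup>n - 1) | n (d\<^sup>a - 1)\<close> are closed under \<open>gcd\<close>, whereas a proper
  divisor \<open>g\<close> of \<open>n\<close> has \<open>0 < n (d\<^sup>g - 1) < d\<^sup>n - 1\<close>.\<close>

lemma power_minus_one_dvd_imp_dvd:
  fixes d n m :: nat
  assumes d: "d \<ge> 2" and n: "n > 0" and dvd: "(d ^ n - 1) dvd n * (d ^ m - 1)"
  shows "n dvd m"
proof -
  let ?N = "d ^ n - 1"
  have dvd_iff_cong: "?N dvd n * (d ^ a - 1) \<longleftrightarrow> [n * d ^ a = n] (mod ?N)" for a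
    using d by (simp add: cong_altdef_nat right_diff_distrib')
  define g where "g = gcd n m"
  have g: "g dvd n" "0 < g" "g \<le> n"
    using n by (auto simp: g_def intro: dvd_imp_le)
  have "[n * d ^ g = n] (mod ?N)"
    unfolding g_def using dvd
    by (intro cong_mult_power_gcd dvd_iff_cong[THEN iffD1]) simp_all
  then have "?N dvd n * (d ^ g - 1)"
    by (rule dvd_iff_cong[THEN iffD2])
  moreover have "n * (d ^ g - 1) > 0"
    using d g(2) n one_less_power[of d g] by simp
  ultimately have "\<not> n * (d ^ g - 1) < ?N"
    by (auto dest: dvd_imp_le)
  with mult_power_minus_one_less[OF d g(1,2)] have "g = n"
    using g(3) by linarith
  then show ?thesis
    by (simp add: g_def flip: gcd_nat.absorb_iff1)
qed


locale ore_extension =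
  fixes \<sigma> \<delta> :: "'a::field poly \<Rightarrow> 'a poly"
  assumes sigma_add: "\<And>a b. \<sigma> (a + b) = \<sigma> a + \<sigma> b"
      and sigma_mult: "\<And>a b. \<sigma> (a * b) = \<sigma> a * \<sigma> b"
      and sigma_one: "\<sigma> 1 = 1"
      and sigma_smult: "\<And>c a. \<sigma> (smult c a) = smult c (\<sigma> a)"
      and delta_add: "\<And>a b. \<delta> (a + b) = \<delta> a + \<delta> b"
      and delta_smult: "\<And>c a. \<delta> (smult c a) = smult c (\<delta> a)"
      and delta_mult: "\<And>a b. \<delta> (a * b) = \<sigma> a * \<delta> b + \<delta> a * b"
begin

abbreviation xmul :: "'a poly poly \<Rightarrow> 'a poly poly" where
  "xmul \<equiv> ore_xmul \<sigma> \<delta>"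

abbreviation omult :: "'a poly poly \<Rightarrow> 'a poly poly \<Rightarrow> 'a poly poly" (infixl "\<star>" 70) where
  "A \<star> B \<equiv> ore_mult \<sigma> \<delta> A B"

lemma sigma_0 [simp]: "\<sigma> 0 = 0"
  using sigma_add[of 0 0] by (metis add_0 add_cancel_right_right)

lemma delta_0 [simp]: "\<delta> 0 = 0"
  using delta_add[of 0 0] by (metis add_0 add_cancel_right_right)

lemma sigma_const [simp]: "\<sigma> [:c:] = [:c:]"
  using sigma_smult[of c 1] by (simp add: sigma_one)

lemma delta_one [simp]: "\<delta> 1 = 0"
proof -
  have "\<delta> 1 = \<delta> 1 + \<delta> 1"
    using delta_mult[of 1 1] by (simp add: sigma_one)
  then show ?thesis
    by (metis add_cancel_right_right)
qed

lemma delta_const [simp]: "\<delta> [:c:] = 0"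
  using delta_smult[of c 1] by simp

lemma sigma_pcompose: "\<sigma> f = f \<circ>\<^sub>p \<sigma> [:0, 1:]"
proof (induction f)
  case (pCons a f)
  have "\<sigma> (pCons a f) = \<sigma> ([:a:] + [:0, 1:] * f)"
    by simp
  also have "\<dots> = [:a:] + \<sigma> [:0, 1:] * (f \<circ>\<^sub>p \<sigma> [:0, 1:])"
    by (simp only: sigma_add sigma_mult sigma_const pCons.IH)
  finally show ?case
    by (simp add: pcompose_pCons)
qed simp

lemma funpow_sigma_pcompose: "(\<sigma> ^^ k) f = f \<circ>\<^sub>p (\<sigma> ^^ k) [:0, 1:]"
proof (induction k)
  case (Suc k)
  then show ?case
    by (simp add: sigma_pcompose[of "_ \<circ>\<^sub>p _"] sigma_pcompose[of "(\<sigma> ^^ k) _"] pcompose_assoc)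
qed (simp add: pcompose_idR)

lemma degree_funpow_sigma: "degree ((\<sigma> ^^ k) f) = degree f * degree (\<sigma> [:0, 1:]) ^ k"
proof (induction k arbitrary: f)
  case (Suc k)
  then show ?case
    by (simp add: sigma_pcompose[of "(\<sigma> ^^ k) f"] degree_pcompose)
qed simp

lemma funpow_sigma_diff_smult: "(\<sigma> ^^ k) (f - smult c g) = (\<sigma> ^^ k) f - smult c ((\<sigma> ^^ k) g)"
  by (simp only: funpow_sigma_pcompose[of k "f - smult c g"] funpow_sigma_pcompose[of k f]
      funpow_sigma_pcompose[of k g] pcompose_diff pcompose_smult)

lemma xmul_add: "xmul (A + B) = xmul A + xmul B"
  unfolding ore_xmul_def
  by (intro poly_eqI) (simp add: coeff_map_poly coeff_pCons sigma_add delta_add split: nat.splits)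

lemma xmul_0 [simp]: "xmul 0 = 0"
  unfolding ore_xmul_def by simp

lemma xmul_smult: "xmul (smult r B) = smult (\<sigma> r) (xmul B) + smult (\<delta> r) B"
  unfolding ore_xmul_def
  by (intro poly_eqI)
    (simp add: coeff_map_poly coeff_pCons sigma_mult delta_mult algebra_simps split: nat.splits)

lemma xmul_monom_one: "xmul (monom 1 j) = monom 1 (Suc j)"
  by (simp add: ore_xmul_def map_poly_monom sigma_one monom_Suc)

lemma mult_0_left [simp]: "0 \<star> B = 0"
  unfolding ore_mult_def by simp

lemma mult_pCons: "pCons a A \<star> B = smult a B + A \<star> xmul B"
proof -
  have sum_upto: "P \<star> Q = (\<Sum>i\<le>N. smult (coeff P i) ((xmul ^^ i) Q))" if "degree P \<le> N" for P Q N
    unfolding ore_mult_def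
    by (rule sum.mono_neutral_left) (use that in \<open>auto simp: not_le intro!: coeff_eq_0\<close>)
  have "pCons a A \<star> B = (\<Sum>i\<le>Suc (degree A). smult (coeff (pCons a A) i) ((xmul ^^ i) B))"
    by (rule sum_upto) (simp add: degree_pCons_le)
  also have "\<dots> = smult a B + (\<Sum>i\<le>degree A. smult (coeff A i) ((xmul ^^ i) (xmul B)))"
    by (subst sum.atMost_Suc_shift) (simp add: funpow_Suc_right del: funpow.simps)
  finally show ?thesis
    by (simp add: ore_mult_def)
qed

lemma mult_add_left: "(A + A') \<star> B = A \<star> B + A' \<star> B"
proof (induction A arbitrary: A' B)
  case (pCons a A)
  obtain a' A'' where "A' = pCons a' A''"
    by (cases A') auto
  then show ?case
    using pCons.IH[of A'' "xmul B"] by (simp add: mult_pCons smult_add_left algebra_simps)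
qed simp

lemma mult_add_right: "A \<star> (B + B') = A \<star> B + A \<star> B'"
  by (induction A arbitrary: B B') (simp_all add: mult_pCons xmul_add smult_add_right algebra_simps)

lemma mult_0_right [simp]: "A \<star> 0 = 0"
  by (induction A) (simp_all add: mult_pCons)

lemma mult_diff_left: "(A - A') \<star> B = A \<star> B - A' \<star> B"
  using mult_add_left[of "A - A'" A' B] by (simp add: algebra_simps)

lemma mult_diff_right: "A \<star> (B - B') = A \<star> B - A \<star> B'"
  using mult_add_right[of A "B - B'" B'] by (simp add: algebra_simps)

lemma mult_sum_left: "(\<Sum>i\<in>I. f i) \<star> B = (\<Sum>i\<in>I. f i \<star> B)"
  by (induction I rule: infinite_finite_induct) (simp_all add: mult_add_left)

lemma mult_sum_right: "A \<star> (\<Sum>i\<in>I. f i) = (\<Sum>i\<in>I. A \<star> f i)"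
  by (induction I rule: infinite_finite_induct) (simp_all add: mult_add_right)

lemma mult_smult_left: "smult a A \<star> B = smult a (A \<star> B)"
  by (induction A arbitrary: B) (simp_all add: mult_pCons smult_add_right)

lemma mult_smult_const_right: "A \<star> smult [:c:] B = smult [:c:] (A \<star> B)"
  by (induction A arbitrary: B) (simp_all add: mult_pCons xmul_smult smult_add_right mult.commute)

lemma mult_monom_one_right: "A \<star> monom 1 j = A * monom 1 j"
proof (induction A arbitrary: j)
  case (pCons a A)
  have "pCons a A \<star> monom 1 j = smult a (monom 1 j) + A * monom 1 (Suc j)"
    by (simp add: mult_pCons xmul_monom_one pCons.IH)
  then show ?case
    by (simp add: monom_Suc)
qed simp

lemma mult_1_left [simp]: "1 \<star> B = B"
  using mult_pCons[of 1 0 B, folded one_pCons] by simp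

lemma mult_1_right [simp]: "A \<star> 1 = A"
  using mult_monom_one_right[of A 0] by (simp add: monom_0 one_pCons[symmetric])

lemma xmul_mult: "xmul (B \<star> C) = xmul B \<star> C"
proof (induction B arbitrary: C)
  case (pCons b B)
  have "xmul (pCons b B \<star> C) = smult (\<sigma> b) (xmul C) + smult (\<delta> b) C + xmul B \<star> xmul C"
    by (simp add: mult_pCons xmul_add xmul_smult pCons.IH)
  also have "xmul B \<star> xmul C = map_poly \<sigma> B \<star> xmul (xmul C) + map_poly \<delta> B \<star> xmul C"
    by (simp add: ore_xmul_def[of _ _ B] mult_add_left mult_pCons)
  also have "smult (\<sigma> b) (xmul C) + smult (\<delta> b) C + \<dots> = xmul (pCons b B) \<star> C"
    by (simp add: ore_xmul_def[of _ _ "pCons b B"] map_poly_pCons mult_pCons mult_add_left)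
  finally show ?case .
qed simp

lemma mult_assoc: "(A \<star> B) \<star> C = A \<star> (B \<star> C)"
  by (induction A arbitrary: B) (simp_all add: mult_pCons mult_add_left mult_smult_left xmul_mult)

abbreviation opow :: "'a poly poly \<Rightarrow> nat \<Rightarrow> 'a poly poly" where
  "opow \<equiv> ore_pow \<sigma> \<delta>"

abbreviation centralizer :: "'a poly poly \<Rightarrow> 'a poly poly set" where
  "centralizer \<equiv> ore_centralizer \<sigma> \<delta>"

abbreviation Kalg :: "'a poly poly \<Rightarrow> 'a poly poly set" where
  "Kalg \<equiv> ore_Kalg \<sigma> \<delta>"

lemma ore_pow_0 [simp]: "opow A 0 = 1"
  by (simp add: ore_pow_def)

lemma ore_pow_Suc: "opow A (Suc k) = A \<star> opow A k"
  by (simp add: ore_pow_def)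

lemma ore_pow_Suc': "opow A k \<star> A = opow A (Suc k)"
proof (induction k)
  case (Suc k)
  then show ?case
    by (simp add: ore_pow_Suc mult_assoc)
qed (simp add: ore_pow_Suc)

lemma ore_pow_in_centralizer: "opow A k \<in> centralizer A"
  by (simp add: ore_centralizer_def ore_pow_Suc' ore_pow_Suc)

lemma centralizer_diff: "Q \<in> centralizer A \<Longrightarrow> R \<in> centralizer A \<Longrightarrow> Q - R \<in> centralizer A"
  by (simp add: ore_centralizer_def mult_diff_left mult_diff_right)

lemma centralizer_smult_const: "Q \<in> centralizer A \<Longrightarrow> smult [:c:] Q \<in> centralizer A"
  by (simp add: ore_centralizer_def mult_smult_left mult_smult_const_right)

lemma Kalg_subset_centralizer: "Kalg A \<subseteq> centralizer A"
proof
  fix Q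
  assume "Q \<in> Kalg A"
  then obtain c m where Q: "Q = (\<Sum>i\<le>m. smult [:c i:] (opow A i))"
    unfolding ore_Kalg_def by auto
  have "A \<star> Q = (\<Sum>i\<le>m. smult [:c i:] (opow A (Suc i)))"
    unfolding Q mult_sum_right by (simp add: mult_smult_const_right ore_pow_Suc)
  moreover have "Q \<star> A = (\<Sum>i\<le>m. smult [:c i:] (opow A (Suc i)))"
    unfolding Q mult_sum_left by (simp add: mult_smult_left ore_pow_Suc')
  ultimately show "Q \<in> centralizer A"
    unfolding ore_centralizer_def by simp
qed

lemma smult_ore_pow_in_Kalg: "smult [:c:] (opow A k) \<in> Kalg A"
proof -
  have "smult [:c:] (opow A k) = (\<Sum>i\<le>k. smult [:if i = k then c else 0:] (opow A i))"
    by (simp add: if_distrib[of "\<lambda>a. smult [:a:] _"] cong: if_cong)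
  then show ?thesis
    unfolding ore_Kalg_def by (intro CollectI exI[of _ "\<lambda>i. if i = k then c else 0"] exI[of _ k])
qed

lemma Kalg_add:
  assumes "Q \<in> Kalg A" "Q' \<in> Kalg A"
  shows "Q + Q' \<in> Kalg A"
proof -
  obtain c m c' m' where
    Q: "Q = (\<Sum>i\<le>m. smult [:c i:] (opow A i))" and
    Q': "Q' = (\<Sum>i\<le>m'. smult [:c' i:] (opow A i))"
    using assms unfolding ore_Kalg_def by auto
  define N where "N = max m m'"
  have pad: "(\<Sum>i\<le>l. smult [:b i:] (opow A i)) = (\<Sum>i\<le>N. smult [:if i \<le> l then b i else 0:] (opow A i))"
    if "l \<le> N" for l b
    using that by (intro sum.mono_neutral_cong_left) auto
  have "Q + Q' = (\<Sum>i\<le>N. smult [:if i \<le> m then c i else 0:] (opow A i))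
      + (\<Sum>i\<le>N. smult [:if i \<le> m' then c' i else 0:] (opow A i))"
    unfolding Q Q' using pad[of m c] pad[of m' c'] by (simp add: N_def)
  also have "\<dots> = (\<Sum>i\<le>N. smult [:(if i \<le> m then c i else 0) + (if i \<le> m' then c' i else 0):] (opow A i))"
    by (simp flip: sum.distrib smult_add_left)
  finally show ?thesis
    unfolding ore_Kalg_def
    by (intro CollectI exI[of _ "\<lambda>i. (if i \<le> m then c i else 0) + (if i \<le> m' then c' i else 0)"] exI[of _ N])
qed

definition lead_eq :: "nat \<Rightarrow> nat \<Rightarrow> 'a poly \<Rightarrow> bool" where
  "lead_eq n m f \<longleftrightarrow> monom 1 n * (\<sigma> ^^ n) f = f * (\<sigma> ^^ m) (monom 1 n)"

lemma lead_eq_diff_smult: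
  assumes "lead_eq n m f" "lead_eq n m g"
  shows "lead_eq n m (f - smult c g)"
proof -
  have "monom 1 n * (\<sigma> ^^ n) (f - smult c g)
      = monom 1 n * (\<sigma> ^^ n) f - smult c (monom 1 n * (\<sigma> ^^ n) g)"
    by (simp add: funpow_sigma_diff_smult right_diff_distrib)
  also have "\<dots> = (f - smult c g) * (\<sigma> ^^ m) (monom 1 n)"
    using assms by (simp add: lead_eq_def left_diff_distrib)
  finally show ?thesis
    unfolding lead_eq_def .
qed

end

locale ore_extension_deg = ore_extension +
  assumes degree_sigma_var: "degree (\<sigma> [:0, 1:]) > 1"
begin

lemma funpow_sigma_eq_0_iff [simp]: "(\<sigma> ^^ k) f = 0 \<longleftrightarrow> f = 0"
proof -
  have "degree ((\<sigma> ^^ k) [:0, 1:]) > 0"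
    using degree_sigma_var by (simp add: degree_funpow_sigma)
  then show ?thesis
    by (simp add: funpow_sigma_pcompose[of k f] pcompose_eq_0_iff)
qed

lemma degree_lead_coeff_xmul:
  assumes "B \<noteq> 0"
  shows "degree (xmul B) = Suc (degree B) \<and> lead_coeff (xmul B) = \<sigma> (lead_coeff B)"
proof -
  have sigma_nz: "\<sigma> b \<noteq> 0" if "b \<noteq> 0" for b
    using that funpow_sigma_eq_0_iff[of 1 b] by simp
  have "lead_coeff (map_poly \<sigma> B) = \<sigma> (lead_coeff B)"
    using assms sigma_nz by (simp add: lead_coeff_map_poly_nz)
  then have shift: "degree (pCons 0 (map_poly \<sigma> B)) = Suc (degree B)"
    "lead_coeff (pCons 0 (map_poly \<sigma> B)) = \<sigma> (lead_coeff B)"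
    using assms sigma_nz by (auto simp: degree_map_poly)
  have "degree (map_poly \<delta> B) \<le> degree B"
    by (rule degree_le) (auto simp: coeff_map_poly coeff_eq_0)
  then have lower: "degree (map_poly \<delta> B) < degree (pCons 0 (map_poly \<sigma> B))"
    using shift(1) by simp
  have "xmul B = map_poly \<delta> B + pCons 0 (map_poly \<sigma> B)"
    unfolding ore_xmul_def by (rule add.commute)
  then show ?thesis
    using shift degree_add_eq_right[OF lower] lead_coeff_add_le[OF lower] by simp
qed

lemma degree_lead_coeff_mult:
  assumes "A \<noteq> 0" "B \<noteq> 0"
  shows "degree (A \<star> B) = degree A + degree B
    \<and> lead_coeff (A \<star> B) = lead_coeff A * (\<sigma> ^^ degree A) (lead_coeff B)"
  using assms
proof (induction A arbitrary: B)
  case (pCons a A)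
  show ?case
  proof (cases "A = 0")
    case True
    with pCons.hyps show ?thesis
      by (simp add: mult_pCons degree_smult_eq)
  next
    case False
    have xB: "degree (xmul B) = Suc (degree B)" "lead_coeff (xmul B) = \<sigma> (lead_coeff B)"
      using degree_lead_coeff_xmul[OF pCons.prems(2)] by auto
    then have "xmul B \<noteq> 0"
      by auto
    note IH = pCons.IH[OF False this]
    have deg: "degree (A \<star> xmul B) = Suc (degree A + degree B)"
      using IH xB(1) by simp
    have lc: "lead_coeff (A \<star> xmul B) = lead_coeff A * (\<sigma> ^^ Suc (degree A)) (lead_coeff B)"
      using conjunct2[OF IH] unfolding xB(2) by (simp add: funpow_Suc_right del: funpow.simps)
    have lower: "degree (smult a B) < degree (A \<star> xmul B)"
      using deg degree_smult_le[of a B] by linarith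
    have "degree (pCons a A \<star> B) = degree (A \<star> xmul B)"
      unfolding mult_pCons by (rule degree_add_eq_right[OF lower])
    moreover have "lead_coeff (pCons a A \<star> B) = lead_coeff (A \<star> xmul B)"
      unfolding mult_pCons by (rule lead_coeff_add_le[OF lower])
    ultimately show ?thesis
      using False deg lc by simp
  qed
qed simp

lemma mult_eq_0_iff: "A \<star> B = 0 \<longleftrightarrow> A = 0 \<or> B = 0"
proof (cases "A = 0 \<or> B = 0")
  case False
  then have "lead_coeff (A \<star> B) = lead_coeff A * (\<sigma> ^^ degree A) (lead_coeff B)"
    using degree_lead_coeff_mult by blast
  with False show ?thesis
    by auto
qed auto

lemma ore_pow_nonzero: "A \<noteq> 0 \<Longrightarrow> opow A k \<noteq> 0"
  by (induction k) (simp_all add: ore_pow_Suc mult_eq_0_iff)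

lemma degree_ore_pow: "A \<noteq> 0 \<Longrightarrow> degree (opow A k) = k * degree A"
  by (induction k) (simp_all add: ore_pow_Suc degree_lead_coeff_mult ore_pow_nonzero)

lemma centralizer_lead_eq:
  assumes "Q \<in> centralizer (monom (monom 1 n) n)" "Q \<noteq> 0"
  shows "lead_eq n (degree Q) (lead_coeff Q)"
proof -
  let ?P = "monom (monom (1::'a) n) n"
  have P: "?P \<noteq> 0" "lead_coeff ?P = monom 1 n" "degree ?P = n"
    by (simp_all add: degree_monom_eq)
  have "lead_coeff (?P \<star> Q) = lead_coeff (Q \<star> ?P)"
    using assms(1) by (simp add: ore_centralizer_def)
  \<comment> \<open>\<open>lead_coeff\<close> abbreviates \<open>coeff _ (degree _)\<close>, so it has to be rewritten before the degree.\<close>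
  moreover have "lead_coeff (?P \<star> Q) = monom 1 n * (\<sigma> ^^ n) (lead_coeff Q)"
    using conjunct2[OF degree_lead_coeff_mult[OF P(1) assms(2)]] unfolding P(2) unfolding P(3) .
  moreover have "lead_coeff (Q \<star> ?P) = lead_coeff Q * (\<sigma> ^^ degree Q) (monom 1 n)"
    using conjunct2[OF degree_lead_coeff_mult[OF assms(2) P(1)]] unfolding P(2) .
  ultimately show ?thesis
    by (simp add: lead_eq_def)
qed

lemma degree_of_lead_eq:
  assumes "f \<noteq> 0" "lead_eq n m f"
  shows "degree f * (degree (\<sigma> [:0, 1:]) ^ n - 1) = n * (degree (\<sigma> [:0, 1:]) ^ m - 1)"
proof -
  let ?d = "degree (\<sigma> [:0, 1:])"
  have "n + degree f * ?d ^ n = degree f + n * ?d ^ m"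
    using arg_cong[OF assms(2)[unfolded lead_eq_def], of degree] assms(1)
    by (simp add: degree_mult_eq degree_monom_eq degree_funpow_sigma)
  moreover have "degree f \<le> degree f * ?d ^ n" "n \<le> n * ?d ^ m"
    using degree_sigma_var by simp_all
  ultimately show ?thesis
    by (simp add: right_diff_distrib')
qed

lemma lead_eq_imp_dvd:
  assumes "n > 0" "f \<noteq> 0" "lead_eq n m f"
  shows "n dvd m"
proof (rule power_minus_one_dvd_imp_dvd)
  show "degree (\<sigma> [:0, 1:]) \<ge> 2"
    using degree_sigma_var by simp
  show "(degree (\<sigma> [:0, 1:]) ^ n - 1) dvd n * (degree (\<sigma> [:0, 1:]) ^ m - 1)"
    unfolding degree_of_lead_eq[OF assms(2,3), symmetric] by simp
qed (rule assms(1))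

lemma lead_eq_same_degree:
  assumes "n > 0" "f \<noteq> 0" "lead_eq n m f" "g \<noteq> 0" "lead_eq n m g"
  shows "degree f = degree g"
proof -
  have "degree (\<sigma> [:0, 1:]) ^ n > 1"
    using degree_sigma_var assms(1) by (intro one_less_power)
  then have "degree (\<sigma> [:0, 1:]) ^ n - 1 \<noteq> 0"
    by simp
  then show ?thesis
    using degree_of_lead_eq[OF assms(2,3)] degree_of_lead_eq[OF assms(4,5)] by (metis mult_cancel2)
qed

lemma lead_eq_proportional:
  assumes "n > 0" "p \<noteq> 0" "lead_eq n m p" "lead_eq n m q"
  shows "q = smult (lead_coeff q / lead_coeff p) p"
proof (rule ccontr)
  define r where "r = q - smult (lead_coeff q / lead_coeff p) p"
  assume "q \<noteq> smult (lead_coeff q / lead_coeff p) p"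
  then have "r \<noteq> 0" "q \<noteq> 0"
    by (auto simp: r_def)
  have "lead_eq n m r"
    unfolding r_def using assms(4,3) by (rule lead_eq_diff_smult)
  have deg_p: "degree p = degree q"
    using lead_eq_same_degree[OF assms(1-3) \<open>q \<noteq> 0\<close> assms(4)] .
  have deg_r: "degree r = degree q"
    using lead_eq_same_degree[OF assms(1) \<open>r \<noteq> 0\<close> \<open>lead_eq n m r\<close> \<open>q \<noteq> 0\<close> assms(4)] .
  have "coeff p (degree q) \<noteq> 0"
    using deg_p assms(2) by (metis leading_coeff_0_iff)
  with deg_p have "coeff r (degree q) = 0"
    by (simp add: r_def)
  with deg_r \<open>r \<noteq> 0\<close> show False
    by (metis leading_coeff_0_iff)
qed

lemma centralizer_lead_coeff_multiple:
  assumes n: "n > 0" and Q: "Q \<in> centralizer (monom (monom 1 n) n)" "Q \<noteq> 0"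
  obtains c k where "degree (opow (monom (monom 1 n) n) k) = degree Q"
    and "lead_coeff Q = smult c (lead_coeff (opow (monom (monom 1 n) n) k))"
proof -
  let ?P = "monom (monom (1::'a) n) n"
  have lead_Q: "lead_eq n (degree Q) (lead_coeff Q)"
    by (rule centralizer_lead_eq[OF Q])
  moreover have "lead_coeff Q \<noteq> 0"
    using Q(2) by simp
  ultimately have "n dvd degree Q"
    using lead_eq_imp_dvd[OF n] by blast
  then obtain k where k: "degree Q = n * k" ..
  define R where "R = opow ?P k"
  have R: "R \<in> centralizer ?P" "R \<noteq> 0" "degree R = degree Q"
    by (simp_all add: R_def k ore_pow_in_centralizer ore_pow_nonzero degree_ore_pow degree_monom_eq
        mult.commute)
  have "lead_eq n (degree Q) (lead_coeff R)"
    using centralizer_lead_eq[OF R(1,2)] unfolding R(3) .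
  with lead_Q have "lead_coeff Q = smult (lead_coeff (lead_coeff Q) / lead_coeff (lead_coeff R)) (lead_coeff R)"
    using R(2) n by (intro lead_eq_proportional) simp_all
  with that[of k] R(3) show ?thesis
    by (simp add: R_def)
qed

lemma centralizer_subset_Kalg:
  assumes n: "n > 0"
  shows "centralizer (monom (monom 1 n) n) \<subseteq> Kalg (monom (monom 1 n) n)"
proof
  let ?P = "monom (monom (1::'a) n) n"
  fix Q
  assume "Q \<in> centralizer ?P"
  then show "Q \<in> Kalg ?P"
  proof (induction "degree Q" arbitrary: Q rule: less_induct)
    case less
    have zero: "0 \<in> Kalg ?P"
      using smult_ore_pow_in_Kalg[of 0 ?P 0] by simp
    show ?case
    proof (cases "Q = 0")
      case False
      obtain c k where deg: "degree (opow ?P k) = degree Q"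
        and lc: "lead_coeff Q = smult c (lead_coeff (opow ?P k))"
        using centralizer_lead_coeff_multiple[OF n less.prems False] .
      define Q' where "Q' = Q - smult [:c:] (opow ?P k)"
      have Q'_centralizer: "Q' \<in> centralizer ?P"
        unfolding Q'_def
        by (intro centralizer_diff centralizer_smult_const less.prems ore_pow_in_centralizer)
      have "degree Q' \<le> degree Q"
        unfolding Q'_def using deg degree_smult_le[of "[:c:]" "opow ?P k"]
        by (intro degree_diff_le) simp_all
      moreover have "coeff Q' (degree Q) = 0"
        unfolding Q'_def using deg lc by simp
      ultimately have "Q' = 0 \<or> degree Q' < degree Q"
        by (metis leading_coeff_0_iff le_neq_implies_less)
      then have "Q' \<in> Kalg ?P"
        using less.hyps[OF _ Q'_centralizer] zero by auto
      then have "Q' + smult [:c:] (opow ?P k) \<in> Kalg ?P"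
        using Kalg_add smult_ore_pow_in_Kalg by blast
      then show ?thesis
        by (simp add: Q'_def)
    qed (simp add: zero)
  qed
qed

end

theorem corollary5p7:
  fixes \<sigma> \<delta> :: "'a::field poly \<Rightarrow> 'a poly" and n :: nat
  assumes sigma_add: "\<And>a b. \<sigma> (a + b) = \<sigma> a + \<sigma> b"
      and sigma_mult: "\<And>a b. \<sigma> (a * b) = \<sigma> a * \<sigma> b"
      and sigma_one: "\<sigma> 1 = 1"
      and sigma_smult: "\<And>c a. \<sigma> (smult c a) = smult c (\<sigma> a)"
      and sigma_deg: "degree (\<sigma> [:0, 1:]) > 1"
      and delta_add: "\<And>a b. \<delta> (a + b) = \<delta> a + \<delta> b"
      and delta_smult: "\<And>c a. \<delta> (smult c a) = smult c (\<delta> a)"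
      and delta_mult: "\<And>a b. \<delta> (a * b) = \<sigma> a * \<delta> b + \<delta> a * b"
      and n_pos: "n > 0"
  shows "ore_centralizer \<sigma> \<delta> (monom (monom 1 n) n) = ore_Kalg \<sigma> \<delta> (monom (monom 1 n) n)"
proof -
  interpret ore_extension_deg \<sigma> \<delta>
    by unfold_locales (fact assms)+
  show ?thesis
    using centralizer_subset_Kalg[OF n_pos] Kalg_subset_centralizer by blast
qed

end
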